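(* Let $\mathbf A$ be a Pavelka algebra and $\exists\colon A\to A$ a closure operator, and put $\forall(x)=\neg\exists(\neg x)$. Then $(\mathbf A,\exists)$ is a monadic Pavelka algebra if and only if $(\mathbf A,\forall,\forall)$ is a tense Pavelka algebra.
   Context: An MV-algebra $(A;\oplus,\neg,0)$ carries derived operations $1=\neg0$, $x\cdot y=\neg(\neg x\oplus\neg y)$, $x\rightarrow y=\neg x\oplus y$, lattice operations $\vee,\wedge$ of the order $x\le y$ iff $\neg x\oplus y=1$. A Pavelka algebra is $\mathbf A=(A;\oplus,\neg,\{\mathbf r\mid r\in[0,1]\cap\mathbb Q\})$ with $(A;\oplus,\neg,\mathbf 0)$ an MV-algebra, $\mathbf r\oplus\mathbf s=\mathbf t$ whenever $\min\{r+s,1\}=t$, and $\neg\mathbf r=\mathbf s$ whenever $1-r=s$. A closure operator is a monotone $C$ with $x\le C(x)$, $C(C(x))=C(x)$. A monadic Pavelka algebra is a pair $(\mathbf A,\exists)$ with $\exists$ a closure operator on $A$ such that $\exists(\neg\exists(x))=\neg\exists(x)$ and $\mathbf r\cdot\exists(x)=\exists(\mathbf r\cdot x)$ for all $x\in A$ and constants $\mathbf r$. A tense Pavelka algebra is $(\mathbf A,G,H)$ with $G,H\colon A\to A$ such that for all $x,y$ and constants $\mathbf r$: (PT1) $G(x\wedge y)=G(x)\wedge G(y)$, $H(x\wedge y)=H(x)\wedge H(y)$; (PT2) $\mathbf r\rightarrow G(x)=G(\mathbf r\rightarrow x)$, $\mathbf r\rightarrow H(x)=H(\mathbf r\rightarrow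 x)$; (PT3) $\neg H(\neg G(x))\le x$, $\neg G(\neg H(x))\le x$. *)

theory Defs
  imports Complex_Main
begin

text \<open>An algebra is given by a carrier A, addition pl (oplus), negation ng, and a
  family of rational constants cst r (meaningful for r in [0,1] cap Q).
  The MV-zero is the constant cst 0.\<close>

definition mv_algebra :: "'a set \<Rightarrow> ('a \<Rightarrow> 'a \<Rightarrow> 'a) \<Rightarrow> ('a \<Rightarrow> 'a) \<Rightarrow> 'a \<Rightarrow> bool" where
  "mv_algebra A pl ng z \<longleftrightarrow>
     z \<in> A \<and>
     (\<forall>x\<in>A. \<forall>y\<in>A. pl x y \<in> A) \<and> (\<forall>x\<in>A. ng x \<in> A) \<and>
     (\<forall>x\<in>A. \<forall>y\<in>A. \<forall>w\<in>A. pl x (pl y w) = pl (pl x y) w) \<and>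
     (\<forall>x\<in>A. \<forall>y\<in>A. pl x y = pl y x) \<and>
     (\<forall>x\<in>A. pl x z = x) \<and>
     (\<forall>x\<in>A. ng (ng x) = x) \<and>
     (\<forall>x\<in>A. pl x (ng z) = ng z) \<and>
     (\<forall>x\<in>A. \<forall>y\<in>A. pl (ng (pl (ng x) y)) y = pl (ng (pl (ng y) x)) x)"

definition rconst :: "rat set" where
  "rconst = {r. 0 \<le> r \<and> r \<le> 1}"

definition mv_one :: "('a \<Rightarrow> 'a) \<Rightarrow> (rat \<Rightarrow> 'a) \<Rightarrow> 'a" where
  "mv_one ng cst = ng (cst 0)"

definition mv_mult :: "('a \<Rightarrow> 'a \<Rightarrow> 'a) \<Rightarrow> ('a \<Rightarrow> 'a) \<Rightarrow> 'a \<Rightarrow> 'a \<Rightarrow> 'a" where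
  "mv_mult pl ng x y = ng (pl (ng x) (ng y))"

definition mv_impl :: "('a \<Rightarrow> 'a \<Rightarrow> 'a) \<Rightarrow> ('a \<Rightarrow> 'a) \<Rightarrow> 'a \<Rightarrow> 'a \<Rightarrow> 'a" where
  "mv_impl pl ng x y = pl (ng x) y"

definition mv_le :: "('a \<Rightarrow> 'a \<Rightarrow> 'a) \<Rightarrow> ('a \<Rightarrow> 'a) \<Rightarrow> (rat \<Rightarrow> 'a) \<Rightarrow> 'a \<Rightarrow> 'a \<Rightarrow> bool" where
  "mv_le pl ng cst x y \<longleftrightarrow> pl (ng x) y = mv_one ng cst"

definition mv_sup :: "('a \<Rightarrow> 'a \<Rightarrow> 'a) \<Rightarrow> ('a \<Rightarrow> 'a) \<Rightarrow> 'a \<Rightarrow> 'a \<Rightarrow> 'a" where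
  "mv_sup pl ng x y = pl (ng (pl (ng x) y)) y"

definition mv_inf :: "('a \<Rightarrow> 'a \<Rightarrow> 'a) \<Rightarrow> ('a \<Rightarrow> 'a) \<Rightarrow> 'a \<Rightarrow> 'a \<Rightarrow> 'a" where
  "mv_inf pl ng x y = ng (mv_sup pl ng (ng x) (ng y))"

definition pavelka_algebra :: "'a set \<Rightarrow> ('a \<Rightarrow> 'a \<Rightarrow> 'a) \<Rightarrow> ('a \<Rightarrow> 'a) \<Rightarrow> (rat \<Rightarrow> 'a) \<Rightarrow> bool" where
  "pavelka_algebra A pl ng cst \<longleftrightarrow>
     mv_algebra A pl ng (cst 0) \<and>
     (\<forall>r\<in>rconst. cst r \<in> A) \<and>
     (\<forall>r\<in>rconst. \<forall>s\<in>rconst. pl (cst r) (cst s) = cst (min (r + s) 1)) \<and>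
     (\<forall>r\<in>rconst. ng (cst r) = cst (1 - r))"

definition closure_operator :: "'a set \<Rightarrow> ('a \<Rightarrow> 'a \<Rightarrow> 'a) \<Rightarrow> ('a \<Rightarrow> 'a) \<Rightarrow> (rat \<Rightarrow> 'a) \<Rightarrow> ('a \<Rightarrow> 'a) \<Rightarrow> bool" where
  "closure_operator A pl ng cst C \<longleftrightarrow>
     (\<forall>x\<in>A. C x \<in> A) \<and>
     (\<forall>x\<in>A. \<forall>y\<in>A. mv_le pl ng cst x y \<longrightarrow> mv_le pl ng cst (C x) (C y)) \<and>
     (\<forall>x\<in>A. mv_le pl ng cst x (C x)) \<and>
     (\<forall>x\<in>A. C (C x) = C x)"

definition monadic_pavelka :: "'a set \<Rightarrow> ('a \<Rightarrow> 'a \<Rightarrow> 'a) \<Rightarrow> ('a \<Rightarrow> 'a) \<Rightarrow> (rat \<Rightarrow> 'a) \<Rightarrow> ('a \<Rightarrow> 'a) \<Rightarrow> bool" where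
  "monadic_pavelka A pl ng cst E \<longleftrightarrow>
     pavelka_algebra A pl ng cst \<and> closure_operator A pl ng cst E \<and>
     (\<forall>x\<in>A. E (ng (E x)) = ng (E x)) \<and>
     (\<forall>r\<in>rconst. \<forall>x\<in>A. mv_mult pl ng (cst r) (E x) = E (mv_mult pl ng (cst r) x))"

definition tense_pavelka :: "'a set \<Rightarrow> ('a \<Rightarrow> 'a \<Rightarrow> 'a) \<Rightarrow> ('a \<Rightarrow> 'a) \<Rightarrow> (rat \<Rightarrow> 'a) \<Rightarrow> ('a \<Rightarrow> 'a) \<Rightarrow> ('a \<Rightarrow> 'a) \<Rightarrow> bool" where
  "tense_pavelka A pl ng cst G H \<longleftrightarrow>
     pavelka_algebra A pl ng cst \<and>
     (\<forall>x\<in>A. G x \<in> A) \<and> (\<forall>x\<in>A. H x \<in> A) \<and>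
     (\<forall>x\<in>A. \<forall>y\<in>A. G (mv_inf pl ng x y) = mv_inf pl ng (G x) (G y) \<and>
                    H (mv_inf pl ng x y) = mv_inf pl ng (H x) (H y)) \<and>
     (\<forall>r\<in>rconst. \<forall>x\<in>A. mv_impl pl ng (cst r) (G x) = G (mv_impl pl ng (cst r) x) \<and>
                        mv_impl pl ng (cst r) (H x) = H (mv_impl pl ng (cst r) x)) \<and>
     (\<forall>x\<in>A. mv_le pl ng cst (ng (H (ng (G x)))) x \<and> mv_le pl ng cst (ng (G (ng (H x)))) x)"

end

theory Submission
  imports Defs
begin

text \<open>Negation translates the monadic axioms into the tense axioms for \<open>\<forall> = \<not>\<exists>\<not>\<close>:
  it turns \<open>r \<cdot> \<exists>x\<close> into \<open>r \<rightarrow> \<forall>\<not>x\<close>, so the constant axiom becomes (PT2), and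
  \<open>\<not>\<forall>\<not>\<forall>x = \<exists>\<not>\<exists>\<not>x\<close>, so (PT3) says exactly that every \<open>\<not>\<exists>y\<close> is \<open>\<exists>\<close>-closed.
  (PT1) then comes for free: the closed elements of a closure operator are closed under
  meets, hence, being closed under negation, also under joins; so \<open>\<exists>\<close> preserves joins and
  \<open>\<forall>\<close> preserves meets.\<close>

locale mv_alg =
  fixes A :: "'a set" and pl :: "'a \<Rightarrow> 'a \<Rightarrow> 'a" and ng :: "'a \<Rightarrow> 'a" and cst :: "rat \<Rightarrow> 'a"
  assumes mv_algebra: "mv_algebra A pl ng (cst 0)"
begin

abbreviation "le \<equiv> mv_le pl ng cst"
abbreviation "one \<equiv> ng (cst 0)"
abbreviation "join \<equiv> mv_sup pl ng"
abbreviation "meet \<equiv> mv_inf pl ng"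

lemma zero_in [simp]: "cst 0 \<in> A"
  and pl_in [simp]: "x \<in> A \<Longrightarrow> y \<in> A \<Longrightarrow> pl x y \<in> A"
  and ng_in [simp]: "x \<in> A \<Longrightarrow> ng x \<in> A"
  and pl_assoc: "x \<in> A \<Longrightarrow> y \<in> A \<Longrightarrow> w \<in> A \<Longrightarrow> pl x (pl y w) = pl (pl x y) w"
  and pl_commute: "x \<in> A \<Longrightarrow> y \<in> A \<Longrightarrow> pl x y = pl y x"
  and pl_zero [simp]: "x \<in> A \<Longrightarrow> pl x (cst 0) = x"
  and ng_ng [simp]: "x \<in> A \<Longrightarrow> ng (ng x) = x"
  and pl_one [simp]: "x \<in> A \<Longrightarrow> pl x one = one"
  and lukasiewicz: "x \<in> A \<Longrightarrow> y \<in> A \<Longrightarrow> pl (ng (pl (ng x) y)) y = pl (ng (pl (ng y) x)) x"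
  using mv_algebra unfolding mv_algebra_def by blast+

lemma zero_pl [simp]: "x \<in> A \<Longrightarrow> pl (cst 0) x = x"
  using pl_commute[of "cst 0" x] by simp

lemma one_pl [simp]: "x \<in> A \<Longrightarrow> pl one x = one"
  using pl_commute[of one x] by simp

lemma ng_pl_self [simp]: "x \<in> A \<Longrightarrow> pl (ng x) x = one"
  using lukasiewicz[of one x] by simp

lemma ng_inj: "x \<in> A \<Longrightarrow> y \<in> A \<Longrightarrow> ng x = ng y \<longleftrightarrow> x = y"
  by (metis ng_ng)

lemma ball_ng_iff: "(\<forall>x\<in>A. P (ng x)) \<longleftrightarrow> (\<forall>x\<in>A. P x)"
  by (metis ng_in ng_ng)

lemma le_iff: "le x y \<longleftrightarrow> pl (ng x) y = one"
  unfolding mv_le_def mv_one_def by simp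

lemma le_iff_ex_pl:
  assumes "x \<in> A" "y \<in> A"
  shows "le x y \<longleftrightarrow> (\<exists>c\<in>A. pl x c = y)"
proof
  assume "le x y"
  then have "pl x (ng (pl (ng y) x)) = y"
    using lukasiewicz[of x y] assms pl_commute[of x "ng (pl (ng y) x)"] by (simp add: le_iff)
  then show "\<exists>c\<in>A. pl x c = y" using assms by auto
next
  assume "\<exists>c\<in>A. pl x c = y"
  then obtain c where "c \<in> A" "pl x c = y" by blast
  then show "le x y"
    using pl_assoc[of "ng x" x c] assms by (simp add: le_iff)
qed

lemma le_antisym: "x \<in> A \<Longrightarrow> y \<in> A \<Longrightarrow> le x y \<Longrightarrow> le y x \<Longrightarrow> x = y"
  using lukasiewicz[of x y] by (simp add: le_iff)

lemma le_trans:
  assumes "x \<in> A" "y \<in> A" "z \<in> A" "le x y" "le y z"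
  shows "le x z"
proof -
  obtain a where "a \<in> A" "pl x a = y" using assms le_iff_ex_pl by blast
  moreover obtain b where "b \<in> A" "pl y b = z" using assms le_iff_ex_pl by blast
  ultimately have "pl x (pl a b) = z" using assms pl_assoc by simp
  then show ?thesis using le_iff_ex_pl[of x z] assms \<open>a \<in> A\<close> \<open>b \<in> A\<close> by auto
qed

lemma ng_antimono: "x \<in> A \<Longrightarrow> y \<in> A \<Longrightarrow> le x y \<Longrightarrow> le (ng y) (ng x)"
  using pl_commute[of y "ng x"] by (simp add: le_iff)

lemma pl_mono:
  assumes "x \<in> A" "y \<in> A" "z \<in> A" "le x y"
  shows "le (pl x z) (pl y z)"
proof -
  obtain a where a: "a \<in> A" "pl x a = y" using assms le_iff_ex_pl by blast
  then have "pl (pl x z) a = pl y z"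
    using assms by (metis pl_assoc pl_commute)
  then show ?thesis using le_iff_ex_pl[of "pl x z" "pl y z"] assms a by auto
qed

lemma join_in [simp]: "x \<in> A \<Longrightarrow> y \<in> A \<Longrightarrow> join x y \<in> A"
  by (simp add: mv_sup_def)

lemma meet_in [simp]: "x \<in> A \<Longrightarrow> y \<in> A \<Longrightarrow> meet x y \<in> A"
  by (simp add: mv_inf_def)

lemma join_upper1: "x \<in> A \<Longrightarrow> y \<in> A \<Longrightarrow> le x (join x y)"
  unfolding mv_sup_def
  by (metis le_iff_ex_pl lukasiewicz ng_in pl_commute pl_in)

lemma join_upper2: "x \<in> A \<Longrightarrow> y \<in> A \<Longrightarrow> le y (join x y)"
  unfolding mv_sup_def
  by (metis le_iff_ex_pl ng_in pl_commute pl_in)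

lemma join_least:
  assumes "x \<in> A" "y \<in> A" "z \<in> A" "le x z" "le y z"
  shows "le (join x y) z"
proof -
  have "z = pl (ng (pl (ng z) y)) y"
    using lukasiewicz[of z y] assms by (simp add: le_iff)
  moreover have "le (ng (pl (ng x) y)) (ng (pl (ng z) y))"
    using pl_mono ng_antimono assms by simp
  ultimately show ?thesis
    unfolding mv_sup_def using pl_mono assms by (metis ng_in pl_in)
qed

lemma ng_meet: "x \<in> A \<Longrightarrow> y \<in> A \<Longrightarrow> ng (meet x y) = join (ng x) (ng y)"
  by (simp add: mv_inf_def)

lemma meet_lower1: "x \<in> A \<Longrightarrow> y \<in> A \<Longrightarrow> le (meet x y) x"
  unfolding mv_inf_def using ng_antimono[OF _ _ join_upper1[of "ng x" "ng y"]] by simp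

lemma meet_lower2: "x \<in> A \<Longrightarrow> y \<in> A \<Longrightarrow> le (meet x y) y"
  unfolding mv_inf_def using ng_antimono[OF _ _ join_upper2[of "ng x" "ng y"]] by simp

lemma meet_greatest:
  assumes "x \<in> A" "y \<in> A" "w \<in> A" "le w x" "le w y"
  shows "le w (meet x y)"
  unfolding mv_inf_def
  using ng_antimono[of "join (ng x) (ng y)" "ng w"] join_least ng_antimono assms by simp

lemma mult_in [simp]: "x \<in> A \<Longrightarrow> y \<in> A \<Longrightarrow> mv_mult pl ng x y \<in> A"
  by (simp add: mv_mult_def)

lemma ng_impl: "x \<in> A \<Longrightarrow> y \<in> A \<Longrightarrow> mv_impl pl ng x (ng y) = ng (mv_mult pl ng x y)"
  by (simp add: mv_impl_def mv_mult_def)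

lemma impl_dual_commute_iff_mult_ng_commute:
  assumes "c \<in> A" "x \<in> A" "\<forall>x\<in>A. E x \<in> A"
  shows "mv_impl pl ng c (ng (E (ng x))) = ng (E (ng (mv_impl pl ng c x)))
     \<longleftrightarrow> mv_mult pl ng c (E (ng x)) = E (mv_mult pl ng c (ng x))"
proof -
  have "ng (mv_impl pl ng c x) = mv_mult pl ng c (ng x)"
    using assms by (simp add: mv_impl_def mv_mult_def)
  then show ?thesis using assms by (simp add: ng_impl ng_inj)
qed

lemma mult_commute_iff_dual_impl_commute:
  assumes "c \<in> A" "\<forall>x\<in>A. E x \<in> A"
  shows "(\<forall>x\<in>A. mv_mult pl ng c (E x) = E (mv_mult pl ng c x))
     \<longleftrightarrow> (\<forall>x\<in>A. mv_impl pl ng c (ng (E (ng x))) = ng (E (ng (mv_impl pl ng c x))))"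
  using impl_dual_commute_iff_mult_ng_commute[OF assms(1) _ assms(2)]
    ball_ng_iff[of "\<lambda>x. mv_mult pl ng c (E x) = E (mv_mult pl ng c x)"] by simp

end

locale mv_closure = mv_alg +
  fixes C :: "'a \<Rightarrow> 'a"
  assumes closure_operator: "closure_operator A pl ng cst C"
begin

lemma closure_in [simp]: "x \<in> A \<Longrightarrow> C x \<in> A"
  and closure_mono: "x \<in> A \<Longrightarrow> y \<in> A \<Longrightarrow> le x y \<Longrightarrow> le (C x) (C y)"
  and closure_upper: "x \<in> A \<Longrightarrow> le x (C x)"
  and closure_idem [simp]: "x \<in> A \<Longrightarrow> C (C x) = C x"
  using closure_operator unfolding closure_operator_def by blast+

lemma closure_eqI: "x \<in> A \<Longrightarrow> le (C x) x \<Longrightarrow> C x = x"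
  using le_antisym closure_upper by simp

lemma closed_meet:
  assumes "x \<in> A" "y \<in> A" "C x = x" "C y = y"
  shows "C (meet x y) = meet x y"
proof (rule closure_eqI)
  have "le (C (meet x y)) x" and "le (C (meet x y)) y"
    using closure_mono[OF _ _ meet_lower1] closure_mono[OF _ _ meet_lower2] assms by (metis meet_in)+
  then show "le (C (meet x y)) (meet x y)" using meet_greatest assms by simp
qed (use assms in simp)

lemma closure_join:
  assumes closed_ng: "\<forall>x\<in>A. C (ng (C x)) = ng (C x)" and "x \<in> A" "y \<in> A"
  shows "C (join x y) = join (C x) (C y)"
proof (rule le_antisym)
  have "join (C x) (C y) = ng (meet (ng (C x)) (ng (C y)))"
    using assms by (simp add: mv_inf_def)
  moreover have "C (ng (meet (ng (C x)) (ng (C y)))) = ng (meet (ng (C x)) (ng (C y)))"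
    using closed_ng closed_meet[of "ng (C x)" "ng (C y)"] assms by (metis closure_in meet_in ng_in)
  ultimately have closed: "C (join (C x) (C y)) = join (C x) (C y)"
    by simp
  have "le (join x y) (join (C x) (C y))"
    using join_least le_trans[OF _ _ _ closure_upper join_upper1]
      le_trans[OF _ _ _ closure_upper join_upper2] assms by simp
  then show "le (C (join x y)) (join (C x) (C y))"
    using closure_mono[of "join x y" "join (C x) (C y)"] closed assms by simp
  show "le (join (C x) (C y)) (C (join x y))"
    using join_least closure_mono join_upper1 join_upper2 assms by simp
qed (use assms in simp_all)

lemma dual_meet:
  assumes "\<forall>x\<in>A. C (ng (C x)) = ng (C x)" and "x \<in> A" "y \<in> A"
  shows "ng (C (ng (meet x y))) = meet (ng (C (ng x))) (ng (C (ng y)))"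
  using closure_join[of "ng x" "ng y"] assms by (simp add: ng_meet mv_inf_def)

lemma closed_ng_iff_dual_deflationary:
  "(\<forall>x\<in>A. C (ng (C x)) = ng (C x)) \<longleftrightarrow> (\<forall>x\<in>A. le (C (ng (C (ng x)))) x)"
proof
  assume closed_ng: "\<forall>x\<in>A. C (ng (C x)) = ng (C x)"
  show "\<forall>x\<in>A. le (C (ng (C (ng x)))) x"
  proof
    fix x assume "x \<in> A"
    then have "le (ng (C (ng x))) x"
      using ng_antimono[OF _ _ closure_upper, of "ng x"] by simp
    then show "le (C (ng (C (ng x)))) x"
      using closed_ng \<open>x \<in> A\<close> by simp
  qed
next
  assume "\<forall>x\<in>A. le (C (ng (C (ng x)))) x"
  then show "\<forall>x\<in>A. C (ng (C x)) = ng (C x)"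
    using closure_eqI by (metis closure_idem ng_in ng_ng closure_in)
qed

end

theorem theorem14:
  fixes A :: "'a set" and pl :: "'a \<Rightarrow> 'a \<Rightarrow> 'a" and ng :: "'a \<Rightarrow> 'a"
    and cst :: "rat \<Rightarrow> 'a" and E :: "'a \<Rightarrow> 'a"
  assumes "pavelka_algebra A pl ng cst"
    and "closure_operator A pl ng cst E"
  shows "monadic_pavelka A pl ng cst E \<longleftrightarrow>
         tense_pavelka A pl ng cst (\<lambda>x. ng (E (ng x))) (\<lambda>x. ng (E (ng x)))"
proof -
  interpret mv_closure A pl ng cst E
    using assms by (simp add: mv_closure_def mv_alg_def mv_closure_axioms_def pavelka_algebra_def)
  have const_in: "\<forall>r\<in>rconst. cst r \<in> A"
    using assms(1) unfolding pavelka_algebra_def by blast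
  have constants_iff_PT2: "(\<forall>r\<in>rconst. \<forall>x\<in>A. mv_mult pl ng (cst r) (E x) = E (mv_mult pl ng (cst r) x))
    \<longleftrightarrow> (\<forall>r\<in>rconst. \<forall>x\<in>A. mv_impl pl ng (cst r) (ng (E (ng x))) = ng (E (ng (mv_impl pl ng (cst r) x))))"
    using mult_commute_iff_dual_impl_commute const_in by simp
  have closed_iff_PT3: "(\<forall>x\<in>A. E (ng (E x)) = ng (E x))
    \<longleftrightarrow> (\<forall>x\<in>A. le (ng (ng (E (ng (ng (ng (E (ng x)))))))) x)"
    using closed_ng_iff_dual_deflationary by simp
  show ?thesis
  proof
    assume "monadic_pavelka A pl ng cst E"
    then have closed: "\<forall>x\<in>A. E (ng (E x)) = ng (E x)"
      and mult: "\<forall>r\<in>rconst. \<forall>x\<in>A. mv_mult pl ng (cst r) (E x) = E (mv_mult pl ng (cst r) x)"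
      unfolding monadic_pavelka_def by blast+
    show "tense_pavelka A pl ng cst (\<lambda>x. ng (E (ng x))) (\<lambda>x. ng (E (ng x)))"
      unfolding tense_pavelka_def
      using assms(1) dual_meet[OF closed] constants_iff_PT2 closed_iff_PT3 mult closed by simp
  next
    assume "tense_pavelka A pl ng cst (\<lambda>x. ng (E (ng x))) (\<lambda>x. ng (E (ng x)))"
    then show "monadic_pavelka A pl ng cst E"
      unfolding monadic_pavelka_def tense_pavelka_def
      using assms constants_iff_PT2 closed_iff_PT3 by blast
  qed
qed

end
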